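(* Let $\varphi:\mathbb{R}\to\mathbb{R}$ be a diffeomorphism and let $\Sigma$ be a $\varphi$-stochastically complete $[\varphi,\vec e_3]$-minimal surface in $\mathbb{R}^3$ such that $|\dot\varphi(\mu(p))|\ge\xi$ for all $p$ outside a compact subset of $\Sigma$, for some constant $\xi>0$. Then, for every vector $\vec v\in\mathbb{R}^3$ with $\langle\vec v,\vec e_3\rangle>0$, $\Sigma$ is not contained in $\mathcal{H}^{\varphi}_{\vec v}=\{x\in\mathbb{R}^3:\ \operatorname{sgn}(\dot\varphi)\langle x,\vec v\rangle\le 0\}$.
   Context: Surfaces are connected, orientable, immersed in $\mathbb{R}^3$, without boundary, with unit normal $N$; $\{\vec e_1,\vec e_2,\vec e_3\}$ is the standard basis. For a surface $\Sigma$, $\mu(p)=\langle p,\vec e_3\rangle$ is the height function and $\eta=\langle N,\vec e_3\rangle$ the angle function. Given a smooth $\varphi:\mathbb{R}\to\mathbb{R}$, $\Sigma$ is called $[\varphi,\vec e_3]$-minimal if its mean curvature vector $\vec H$ (trace of the second fundamental form, equal to the Laplacian of the position vector) satisfies $\vec H=\dot\varphi(\mu)\,\eta\,N$; equivalently, writing $\vec H=-HN$, $H=-\dot\varphi(\mu)\eta$. On $\Sigma$ write $\varphi$ for $\varphi\circ\mu$, and let $\Delta^{\varphi}u=\Delta u+\langle\nabla\varphi,\nabla u\rangle$ be the drift Laplacian, where $\Delta,\nabla$ are the Laplacian and gradient of the induced metric. $\Sigma$ is $\varphi$-stochastically complete if for every $u\in C^2(\Sigma)$ with $u^*=\sup_\Sigma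 u<+\infty$ there is a sequence $p_n\in\Sigma$ with $u(p_n)>u^*-1/n$ and $\Delta^{\varphi}u(p_n)<1/n$ for all $n$ (completeness of the metric is not assumed). Since $\varphi$ is a diffeomorphism, $\dot\varphi$ has constant sign $\operatorname{sgn}(\dot\varphi)\in\{1,-1\}$. *)

theory Defs
  imports "HOL-Analysis.Analysis"
begin

definition pd1 :: "(real \<times> real \<Rightarrow> 'b::real_normed_vector) \<Rightarrow> real \<times> real \<Rightarrow> 'b" where
  "pd1 f x = frechet_derivative f (at x) (1, 0)"

definition pd2 :: "(real \<times> real \<Rightarrow> 'b::real_normed_vector) \<Rightarrow> real \<times> real \<Rightarrow> 'b" where
  "pd2 f x = frechet_derivative f (at x) (0, 1)"

fun Ck_on :: "nat \<Rightarrow> (real \<times> real \<Rightarrow> 'b::real_normed_vector) \<Rightarrow> (real \<times> real) set \<Rightarrow> bool" where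
  "Ck_on 0 f U = continuous_on U f"
| "Ck_on (Suc k) f U = (f differentiable_on U \<and> Ck_on k (pd1 f) U \<and> Ck_on k (pd2 f) U)"

definition smooth_on2 :: "(real \<times> real \<Rightarrow> 'b::real_normed_vector) \<Rightarrow> (real \<times> real) set \<Rightarrow> bool" where
  "smooth_on2 f U = (\<forall>k. Ck_on k f U)"

definition smooth_real :: "(real \<Rightarrow> real) \<Rightarrow> bool" where
  "smooth_real f = (\<forall>n x. (deriv ^^ n) f differentiable (at x))"

definition diffeo_real :: "(real \<Rightarrow> real) \<Rightarrow> bool" where
  "diffeo_real f = (bij f \<and> smooth_real f \<and> smooth_real (inv f))"

definition g11 :: "(real \<times> real \<Rightarrow> real^3) \<Rightarrow> real \<times> real \<Rightarrow> real" where
  "g11 Y x = pd1 Y x \<bullet> pd1 Y x"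
definition g12 :: "(real \<times> real \<Rightarrow> real^3) \<Rightarrow> real \<times> real \<Rightarrow> real" where
  "g12 Y x = pd1 Y x \<bullet> pd2 Y x"
definition g22 :: "(real \<times> real \<Rightarrow> real^3) \<Rightarrow> real \<times> real \<Rightarrow> real" where
  "g22 Y x = pd2 Y x \<bullet> pd2 Y x"
definition gdet :: "(real \<times> real \<Rightarrow> real^3) \<Rightarrow> real \<times> real \<Rightarrow> real" where
  "gdet Y x = g11 Y x * g22 Y x - (g12 Y x)\<^sup>2"

text \<open>Laplace--Beltrami operator of the induced metric, in local coordinates:
  (1/sqrt g) d_i (sqrt g g^{ij} d_j f); applies componentwise to vector-valued f.\<close>
definition lap :: "(real \<times> real \<Rightarrow> real^3) \<Rightarrow> (real \<times> real \<Rightarrow> 'b::real_normed_vector) \<Rightarrow> real \<times> real \<Rightarrow> 'b" where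
  "lap Y f x = (1 / sqrt (gdet Y x)) *\<^sub>R
     (pd1 (\<lambda>y. (sqrt (gdet Y y) / gdet Y y) *\<^sub>R (g22 Y y *\<^sub>R pd1 f y - g12 Y y *\<^sub>R pd2 f y)) x
    + pd2 (\<lambda>y. (sqrt (gdet Y y) / gdet Y y) *\<^sub>R (g11 Y y *\<^sub>R pd2 f y - g12 Y y *\<^sub>R pd1 f y)) x)"

text \<open>Inner product of gradients <grad a, grad b> = g^{ij} d_i a d_j b.\<close>
definition grad_inner :: "(real \<times> real \<Rightarrow> real^3) \<Rightarrow> (real \<times> real \<Rightarrow> real) \<Rightarrow> (real \<times> real \<Rightarrow> real) \<Rightarrow> real \<times> real \<Rightarrow> real" where
  "grad_inner Y a b x = (g22 Y x * pd1 a x * pd1 b x - g12 Y x * (pd1 a x * pd2 b x + pd2 a x * pd1 b x)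
      + g11 Y x * pd2 a x * pd2 b x) / gdet Y x"

text \<open>A surface is a topological space M with an immersion X : M \<rightarrow> R^3. A (regular) chart is a
 homeomorphism psi of an open U \<subseteq> R^2 onto an open subset of M such that X \<circ> psi is a smooth
 immersion. (The smooth structure of M is the one induced by X.)\<close>
definition is_chart :: "'a topology \<Rightarrow> ('a \<Rightarrow> real^3) \<Rightarrow> (real \<times> real) set \<Rightarrow> (real \<times> real \<Rightarrow> 'a) \<Rightarrow> bool" where
  "is_chart M X U \<psi> =
     (open U \<and> openin M (\<psi> ` U) \<and>
      homeomorphic_map (top_of_set U) (subtopology M (\<psi> ` U)) \<psi> \<and>
      smooth_on2 (X \<circ> \<psi>) U \<and> (\<forall>x\<in>U. gdet (X \<circ> \<psi>) x > 0))"

text \<open>Connected, orientable (via a global continuous unit normal N), immersed surface without boundary.\<close>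
definition immersed_surface :: "'a topology \<Rightarrow> ('a \<Rightarrow> real^3) \<Rightarrow> ('a \<Rightarrow> real^3) \<Rightarrow> bool" where
  "immersed_surface M X N =
     (topspace M \<noteq> {} \<and> connected_space M \<and> Hausdorff_space M \<and>
      (\<forall>p\<in>topspace M. \<exists>U \<psi> x. is_chart M X U \<psi> \<and> x \<in> U \<and> \<psi> x = p) \<and>
      continuous_map M euclidean N \<and> (\<forall>p\<in>topspace M. norm (N p) = 1) \<and>
      (\<forall>U \<psi> x. is_chart M X U \<psi> \<and> x \<in> U \<longrightarrow>
          N (\<psi> x) \<bullet> pd1 (X \<circ> \<psi>) x = 0 \<and> N (\<psi> x) \<bullet> pd2 (X \<circ> \<psi>) x = 0))"

definition e3 :: "real^3" where "e3 = axis 3 1"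

definition height :: "('a \<Rightarrow> real^3) \<Rightarrow> 'a \<Rightarrow> real" where
  "height X p = X p \<bullet> e3"

definition angle_fun :: "('a \<Rightarrow> real^3) \<Rightarrow> 'a \<Rightarrow> real" where
  "angle_fun N p = N p \<bullet> e3"

text \<open>[phi,e3]-minimal: mean curvature vector (= Laplacian of the position vector) equals
 phi'(mu) eta N.\<close>
definition phi_minimal :: "(real \<Rightarrow> real) \<Rightarrow> 'a topology \<Rightarrow> ('a \<Rightarrow> real^3) \<Rightarrow> ('a \<Rightarrow> real^3) \<Rightarrow> bool" where
  "phi_minimal \<phi> M X N =
     (\<forall>U \<psi> x. is_chart M X U \<psi> \<and> x \<in> U \<longrightarrow>
        lap (X \<circ> \<psi>) (X \<circ> \<psi>) x = (deriv \<phi> (height X (\<psi> x)) * angle_fun N (\<psi> x)) *\<^sub>R N (\<psi> x))"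

definition C2_surface :: "'a topology \<Rightarrow> ('a \<Rightarrow> real^3) \<Rightarrow> ('a \<Rightarrow> real) \<Rightarrow> bool" where
  "C2_surface M X u = (\<forall>U \<psi>. is_chart M X U \<psi> \<longrightarrow> Ck_on 2 (u \<circ> \<psi>) U)"

definition drift_lap :: "(real \<Rightarrow> real) \<Rightarrow> ('a \<Rightarrow> real^3) \<Rightarrow> (real \<times> real \<Rightarrow> 'a) \<Rightarrow> ('a \<Rightarrow> real) \<Rightarrow> real \<times> real \<Rightarrow> real" where
  "drift_lap \<phi> X \<psi> u x =
     lap (X \<circ> \<psi>) (u \<circ> \<psi>) x + grad_inner (X \<circ> \<psi>) (\<phi> \<circ> height X \<circ> \<psi>) (u \<circ> \<psi>) x"

text \<open>phi-stochastic completeness (the drift Laplacian at a point is chart independent; we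
 require the bound in every chart through the point).\<close>
definition phi_stoch_complete :: "(real \<Rightarrow> real) \<Rightarrow> 'a topology \<Rightarrow> ('a \<Rightarrow> real^3) \<Rightarrow> bool" where
  "phi_stoch_complete \<phi> M X =
     (\<forall>u. C2_surface M X u \<and> bdd_above (u ` topspace M) \<longrightarrow>
        (\<exists>p :: nat \<Rightarrow> 'a. \<forall>n\<ge>1. p n \<in> topspace M \<and>
            u (p n) > (SUP q\<in>topspace M. u q) - 1 / real n \<and>
            (\<forall>U \<psi> x. is_chart M X U \<psi> \<and> x \<in> U \<and> \<psi> x = p n \<longrightarrow> drift_lap \<phi> X \<psi> u x < 1 / real n)))"

text \<open>sgn(phi'): constant since phi is a diffeomorphism of R.\<close>
definition sgn_dphi :: "(real \<Rightarrow> real) \<Rightarrow> real" where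
  "sgn_dphi \<phi> = sgn (deriv \<phi> 0)"

end

theory Submission
  imports Defs "HOL-Analysis.Cross3"
begin

text \<open>Test \<open>\<phi>\<close>-stochastic completeness against \<open>u = sgn(\<phi>') \<langle>X, v\<rangle>\<close>, which is
  bounded above when the surface lies in the half-space. Since \<open>\<Delta>X = \<phi>'(\<mu>) \<eta> N\<close> and the
  gradient of a linear height \<open>\<langle>X, w\<rangle>\<close> is the tangential part of \<open>w\<close>, the normal
  contributions cancel and \<open>\<Delta>\<^sup>\<phi> \<langle>X, v\<rangle> = \<phi>'(\<mu>) \<langle>e\<^sub>3, v\<rangle>\<close>. Hence
  \<open>\<Delta>\<^sup>\<phi> u = |\<phi>'(\<mu>)| \<langle>e\<^sub>3, v\<rangle>\<close>, which is bounded below by a positive constant because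
  \<open>|\<phi>'| \<ge> \<xi>\<close> off the compact set and \<open>\<phi>'\<close> vanishes nowhere; no almost-maximising sequence
  with \<open>\<Delta>\<^sup>\<phi> u < 1/n\<close> can exist.\<close>

lemma frechet_derivative_cong_open:
  assumes "open U" "x \<in> U" "\<And>y. y \<in> U \<Longrightarrow> f y = g y"
  shows "frechet_derivative f (at x) = frechet_derivative g (at x)"
proof -
  have "(f has_derivative D) (at x) \<longleftrightarrow> (g has_derivative D) (at x)" for D
    using has_derivative_transform_within_open[OF _ assms(1,2)] assms(3) by metis
  then show ?thesis
    unfolding frechet_derivative_def by simp
qed

lemma pd_cong_open:
  assumes "open U" "x \<in> U" "\<And>y. y \<in> U \<Longrightarrow> f y = g y"
  shows "pd1 f x = pd1 g x" "pd2 f x = pd2 g x"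
  using frechet_derivative_cong_open[OF assms] unfolding pd1_def pd2_def by simp_all

lemma differentiable_on_cong_open:
  assumes "open U" "f differentiable_on U" "\<And>y. y \<in> U \<Longrightarrow> f y = g y"
  shows "g differentiable_on U"
  unfolding differentiable_on_eq_differentiable_at[OF assms(1)]
proof
  fix x assume x: "x \<in> U"
  then obtain D where "(f has_derivative D) (at x)"
    using assms(1,2) differentiable_on_eq_differentiable_at differentiable_def by blast
  then have "(g has_derivative D) (at x)"
    using has_derivative_transform_within_open[OF _ assms(1) x] assms(3) by metis
  then show "g differentiable (at x)"
    unfolding differentiable_def by blast
qed

lemma frechet_derivative_bounded_linear_comp:
  assumes "bounded_linear L" "f differentiable (at x)"
  shows "frechet_derivative (\<lambda>y. L (f y)) (at x) = (\<lambda>h. L (frechet_derivative f (at x) h))"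
proof -
  have "(f has_derivative frechet_derivative f (at x)) (at x)"
    using assms(2) frechet_derivative_works by blast
  then have "((\<lambda>y. L (f y)) has_derivative (\<lambda>h. L (frechet_derivative f (at x) h))) (at x)"
    by (rule bounded_linear.has_derivative[OF assms(1)])
  then show ?thesis
    using frechet_derivative_at by metis
qed

lemma pd_bounded_linear_comp:
  assumes "bounded_linear L" "f differentiable (at x)"
  shows "pd1 (\<lambda>y. L (f y)) x = L (pd1 f x)" "pd2 (\<lambda>y. L (f y)) x = L (pd2 f x)"
  using frechet_derivative_bounded_linear_comp[OF assms] unfolding pd1_def pd2_def by simp_all

lemma pd_chain_real:
  fixes a :: "real \<times> real \<Rightarrow> real"
  assumes "f differentiable (at (a x))" "a differentiable (at x)"
  shows "pd1 (\<lambda>y. f (a y)) x = deriv f (a x) * pd1 a x"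
    "pd2 (\<lambda>y. f (a y)) x = deriv f (a x) * pd2 a x"
proof -
  have "(f has_real_derivative deriv f (a x)) (at (a x))"
    using assms(1) DERIV_deriv_iff_real_differentiable by blast
  moreover have "(a has_derivative frechet_derivative a (at x)) (at x)"
    using assms(2) frechet_derivative_works by blast
  ultimately have "((\<lambda>y. f (a y)) has_derivative
      (\<lambda>h. frechet_derivative a (at x) h * deriv f (a x))) (at x)"
    by (rule DERIV_compose_FDERIV)
  then have "frechet_derivative (\<lambda>y. f (a y)) (at x) =
      (\<lambda>h. frechet_derivative a (at x) h * deriv f (a x))"
    using frechet_derivative_at by metis
  then show "pd1 (\<lambda>y. f (a y)) x = deriv f (a x) * pd1 a x"
    "pd2 (\<lambda>y. f (a y)) x = deriv f (a x) * pd2 a x"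
    unfolding pd1_def pd2_def by simp_all
qed

lemma Ck_on_cong_open:
  assumes "open U" "Ck_on k f U" "\<And>y. y \<in> U \<Longrightarrow> f y = g y"
  shows "Ck_on k g U"
  using assms(2,3)
proof (induction k arbitrary: f g)
  case 0
  then show ?case
    using continuous_on_cong by (metis Ck_on.simps(1))
next
  case (Suc k)
  have "pd1 f y = pd1 g y" "pd2 f y = pd2 g y" if "y \<in> U" for y
    using pd_cong_open[OF assms(1) that, of f g] Suc.prems(2) by blast+
  moreover have "g differentiable_on U"
    using differentiable_on_cong_open[OF assms(1)] Suc.prems by auto
  ultimately show ?case
    using Suc.IH[of "pd1 f" "pd1 g"] Suc.IH[of "pd2 f" "pd2 g"] Suc.prems(1) by simp
qed

lemma Ck_on_bounded_linear_comp:
  assumes L: "bounded_linear L" and U: "open U" and f: "Ck_on k f U"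
  shows "Ck_on k (\<lambda>y. L (f y)) U"
  using f
proof (induction k arbitrary: f)
  case 0
  then show ?case
    using bounded_linear.continuous_on[OF L] by simp
next
  case (Suc k)
  then have fd: "f differentiable (at y)" if "y \<in> U" for y
    using U that by (simp add: differentiable_on_eq_differentiable_at)
  then have "(\<lambda>y. L (f y)) differentiable_on U"
    unfolding differentiable_on_eq_differentiable_at[OF U] differentiable_def
    using bounded_linear.has_derivative[OF L] frechet_derivative_works by blast
  moreover have "Ck_on k (pd1 (\<lambda>y. L (f y))) U" "Ck_on k (pd2 (\<lambda>y. L (f y))) U"
    using Ck_on_cong_open[OF U Suc.IH] Suc.prems pd_bounded_linear_comp[OF L fd] by auto
  ultimately show ?case
    by simp
qed

lemma Ck2_on_differentiable:
  assumes "open U" "Ck_on 2 Y U" "x \<in> U"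
  shows "Y differentiable (at x)" "pd1 Y differentiable (at x)" "pd2 Y differentiable (at x)"
  using assms by (auto simp: numeral_2_eq_2 differentiable_on_eq_differentiable_at)

lemma lap_bounded_linear_comp:
  fixes Y :: "real \<times> real \<Rightarrow> real^3" and L :: "real^3 \<Rightarrow> 'b::real_normed_vector"
  assumes L: "bounded_linear L" and U: "open U" and x: "x \<in> U"
    and Y: "Ck_on 2 Y U" and pos: "gdet Y x > 0"
  shows "lap Y (\<lambda>y. L (Y y)) x = L (lap Y Y x)"
proof -
  define c where "c y = sqrt (gdet Y y) / gdet Y y" for y
  define W1 where "W1 y = c y *\<^sub>R (g22 Y y *\<^sub>R pd1 Y y - g12 Y y *\<^sub>R pd2 Y y)" for y
  define W2 where "W2 y = c y *\<^sub>R (g11 Y y *\<^sub>R pd2 Y y - g12 Y y *\<^sub>R pd1 Y y)" for y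
  have lin: "linear L"
    using L bounded_linear.linear by blast
  have Yd: "Y differentiable (at y)" if "y \<in> U" for y
    using Ck2_on_differentiable[OF U Y that] by blast
  have d1: "pd1 Y differentiable (at x)" and d2: "pd2 Y differentiable (at x)"
    using Ck2_on_differentiable[OF U Y x] by auto
  have gd: "gdet Y differentiable (at x)"
    unfolding gdet_def[abs_def] g11_def g22_def g12_def using d1 d2 by (auto intro!: derivative_intros)
  have "sqrt differentiable (at (gdet Y x))"
    using DERIV_real_sqrt[OF pos] real_differentiable_def by blast
  then have "(\<lambda>y. sqrt (gdet Y y)) differentiable (at x)"
    using differentiable_compose[OF _ gd] by blast
  then have cd: "c differentiable (at x)"
    unfolding c_def[abs_def] using gd pos by (intro differentiable_divide) auto
  have W1d: "W1 differentiable (at x)" and W2d: "W2 differentiable (at x)"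
    unfolding W1_def[abs_def] W2_def[abs_def] g11_def g22_def g12_def
    using cd d1 d2 by (auto intro!: derivative_intros)
  have "pd1 (\<lambda>y. c y *\<^sub>R (g22 Y y *\<^sub>R pd1 (\<lambda>y. L (Y y)) y - g12 Y y *\<^sub>R pd2 (\<lambda>y. L (Y y)) y)) x
      = pd1 (\<lambda>y. L (W1 y)) x"
    "pd2 (\<lambda>y. c y *\<^sub>R (g11 Y y *\<^sub>R pd2 (\<lambda>y. L (Y y)) y - g12 Y y *\<^sub>R pd1 (\<lambda>y. L (Y y)) y)) x
      = pd2 (\<lambda>y. L (W2 y)) x"
    using pd_bounded_linear_comp[OF L Yd]
    by (auto intro!: pd_cong_open[OF U x]
        simp: W1_def W2_def linear_diff[OF lin] linear_scale[OF lin])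
  then have "lap Y (\<lambda>y. L (Y y)) x = (1 / sqrt (gdet Y x)) *\<^sub>R
      (pd1 (\<lambda>y. L (W1 y)) x + pd2 (\<lambda>y. L (W2 y)) x)"
    by (simp add: lap_def c_def)
  also have "\<dots> = L ((1 / sqrt (gdet Y x)) *\<^sub>R (pd1 W1 x + pd2 W2 x))"
    unfolding pd_bounded_linear_comp[OF L W1d] pd_bounded_linear_comp[OF L W2d]
    by (simp add: linear_add[OF lin] linear_scale[OF lin])
  also have "\<dots> = L (lap Y Y x)"
    unfolding lap_def W1_def W2_def c_def ..
  finally show ?thesis .
qed

lemma grad_inner_chain_left:
  fixes a b :: "real \<times> real \<Rightarrow> real"
  assumes "f differentiable (at (a x))" "a differentiable (at x)"
  shows "grad_inner Y (\<lambda>y. f (a y)) b x = deriv f (a x) * grad_inner Y a b x"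
  unfolding grad_inner_def pd_chain_real[OF assms] by (simp add: algebra_simps add_divide_distrib diff_divide_distrib)

lemma gram_cross3_expansion:
  fixes p q w :: "real^3"
  shows "((p \<bullet> p) * (q \<bullet> q) - (p \<bullet> q)\<^sup>2) *\<^sub>R w =
    ((q \<bullet> q) * (p \<bullet> w) - (p \<bullet> q) * (q \<bullet> w)) *\<^sub>R p + ((p \<bullet> p) * (q \<bullet> w) - (p \<bullet> q) * (p \<bullet> w)) *\<^sub>R q
    + (cross3 p q \<bullet> w) *\<^sub>R cross3 p q"
  unfolding vec_eq_iff forall_3
  by (simp add: cross3_def inner_vec_def sum_3 vector_def power2_eq_square; algebra)

text \<open>The left-hand side is \<open>g\<^sup>i\<^sup>j \<langle>\<partial>\<^sub>i, e\<rangle> \<langle>\<partial>\<^sub>j, v\<rangle>\<close>, the inner product of the tangential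
  parts of \<open>e\<close> and \<open>v\<close>; as \<open>n\<close> is a unit multiple of \<open>p \<times> q\<close>, it equals
  \<open>\<langle>e, v\<rangle>\<close> minus the normal parts.\<close>
lemma tangential_inner_eq:
  fixes p q n e v :: "real^3"
  assumes np: "n \<bullet> p = 0" and nq: "n \<bullet> q = 0" and nn: "n \<bullet> n = 1"
    and pos: "(p \<bullet> p) * (q \<bullet> q) - (p \<bullet> q)\<^sup>2 > 0"
  shows "((q \<bullet> q) * (p \<bullet> e) * (p \<bullet> v) - (p \<bullet> q) * ((p \<bullet> e) * (q \<bullet> v) + (q \<bullet> e) * (p \<bullet> v))
      + (p \<bullet> p) * (q \<bullet> e) * (q \<bullet> v)) / ((p \<bullet> p) * (q \<bullet> q) - (p \<bullet> q)\<^sup>2)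
    = e \<bullet> v - (n \<bullet> e) * (n \<bullet> v)"
proof -
  define G where "G = (p \<bullet> p) * (q \<bullet> q) - (p \<bullet> q)\<^sup>2"
  define Q where "Q = cross3 p q"
  have Gn: "G *\<^sub>R n = (Q \<bullet> n) *\<^sub>R Q"
    using gram_cross3_expansion[of p q n] np nq unfolding G_def Q_def by (simp add: inner_commute)
  have G_sq: "G = (Q \<bullet> n)\<^sup>2"
    using arg_cong[OF Gn, of "\<lambda>w. w \<bullet> n"] nn by (simp add: power2_eq_square inner_commute)
  have Gne: "G * (n \<bullet> e) = (Q \<bullet> n) * (Q \<bullet> e)" and Gnv: "G * (n \<bullet> v) = (Q \<bullet> n) * (Q \<bullet> v)"
    using arg_cong[OF Gn, of "\<lambda>w. w \<bullet> e"] arg_cong[OF Gn, of "\<lambda>w. w \<bullet> v"] by simp_all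
  have "G * (G * ((n \<bullet> e) * (n \<bullet> v))) = (G * (n \<bullet> e)) * (G * (n \<bullet> v))"
    by (simp add: algebra_simps)
  also have "\<dots> = (Q \<bullet> n)\<^sup>2 * ((Q \<bullet> e) * (Q \<bullet> v))"
    unfolding Gne Gnv by (simp add: power2_eq_square algebra_simps)
  finally have "G * (G * ((n \<bullet> e) * (n \<bullet> v))) = G * ((Q \<bullet> e) * (Q \<bullet> v))"
    unfolding G_sq .
  then have normal_part: "G * ((n \<bullet> e) * (n \<bullet> v)) = (Q \<bullet> e) * (Q \<bullet> v)"
    using pos G_def by simp
  have "G * (e \<bullet> v) = ((q \<bullet> q) * (p \<bullet> e) * (p \<bullet> v) - (p \<bullet> q) * ((p \<bullet> e) * (q \<bullet> v) + (q \<bullet> e) * (p \<bullet> v))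
      + (p \<bullet> p) * (q \<bullet> e) * (q \<bullet> v)) + (Q \<bullet> e) * (Q \<bullet> v)"
    using arg_cong[OF gram_cross3_expansion[of p q e], of "\<lambda>w. w \<bullet> v"] unfolding G_def Q_def
    by (simp add: inner_add_left algebra_simps)
  then show ?thesis
    using pos unfolding G_def[symmetric] by (simp add: field_simps normal_part[symmetric])
qed

lemma grad_inner_linear_heights:
  fixes Y :: "real \<times> real \<Rightarrow> real^3"
  assumes "Y differentiable (at x)" "n \<bullet> pd1 Y x = 0" "n \<bullet> pd2 Y x = 0" "n \<bullet> n = 1"
    and "gdet Y x > 0"
  shows "grad_inner Y (\<lambda>y. Y y \<bullet> e) (\<lambda>y. Y y \<bullet> v) x = e \<bullet> v - (n \<bullet> e) * (n \<bullet> v)"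
  using tangential_inner_eq[OF assms(2-4), of e v] assms(5)
  unfolding grad_inner_def gdet_def g11_def g12_def g22_def
    pd_bounded_linear_comp[OF bounded_linear_inner_left assms(1)]
  by (simp add: inner_commute)

lemma continuous_nonvanishing_sgn_eq:
  fixes f :: "real \<Rightarrow> real"
  assumes "continuous_on S f" "connected S" "\<And>t. t \<in> S \<Longrightarrow> f t \<noteq> 0" "s \<in> S" "t \<in> S"
  shows "sgn (f s) = sgn (f t)"
proof (rule ccontr)
  assume "sgn (f s) \<noteq> sgn (f t)"
  moreover have "f s \<noteq> 0" "f t \<noteq> 0"
    using assms(3-5) by auto
  ultimately have "f s < 0 \<and> 0 < f t \<or> f t < 0 \<and> 0 < f s"
    by (simp add: sgn_if split: if_splits)
  then obtain a b where ab: "a \<in> S" "b \<in> S" "f a \<le> 0" "0 \<le> f b"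
    using assms(4,5) less_imp_le by blast
  have "connected (f ` S)"
    using assms(1,2) connected_continuous_image by blast
  then have "0 \<in> f ` S"
    using connectedD_interval[OF _ imageI[OF ab(1)] imageI[OF ab(2)] ab(3,4)] by blast
  then show False
    using assms(3) by auto
qed

lemma diffeo_real_differentiable:
  "diffeo_real \<phi> \<Longrightarrow> \<phi> differentiable (at t)"
  unfolding diffeo_real_def smooth_real_def by (metis funpow_0)

lemma diffeo_real_deriv_continuous:
  assumes "diffeo_real \<phi>"
  shows "continuous_on UNIV (deriv \<phi>)"
proof -
  have "(deriv ^^ 1) \<phi> differentiable (at t)" for t
    using assms unfolding diffeo_real_def smooth_real_def by blast
  then have "deriv \<phi> differentiable (at t)" for t
    by simp
  then show ?thesis
    using differentiable_imp_continuous_within continuous_at_imp_continuous_on by blast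
qed

lemma diffeo_real_deriv_nonzero:
  assumes "diffeo_real \<phi>"
  shows "deriv \<phi> t \<noteq> 0"
proof -
  have b: "bij \<phi>" and "smooth_real (inv \<phi>)"
    using assms unfolding diffeo_real_def by auto
  then have "inv \<phi> differentiable (at (\<phi> t))"
    unfolding smooth_real_def by (metis funpow_0)
  then have "(inv \<phi> has_real_derivative deriv (inv \<phi>) (\<phi> t)) (at (\<phi> t))"
    using DERIV_deriv_iff_real_differentiable by blast
  moreover have "inv \<phi> (\<phi> t) = t"
    using b by (simp add: bij_is_inj)
  moreover have "(\<phi> has_real_derivative deriv \<phi> t) (at t)"
    using diffeo_real_differentiable[OF assms] DERIV_deriv_iff_real_differentiable by blast
  ultimately have "((\<phi> \<circ> inv \<phi>) has_real_derivative deriv \<phi> t * deriv (inv \<phi>) (\<phi> t)) (at (\<phi> t))"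
    using DERIV_chain[of \<phi> "deriv \<phi> t" "inv \<phi>"] by simp
  moreover have "\<phi> \<circ> inv \<phi> = id"
    using b by (auto simp: fun_eq_iff bij_def surj_f_inv_f)
  ultimately have "(id has_real_derivative deriv \<phi> t * deriv (inv \<phi>) (\<phi> t)) (at (\<phi> t))"
    by simp
  then have "deriv \<phi> t * deriv (inv \<phi>) (\<phi> t) = 1"
    using DERIV_unique DERIV_ident unfolding id_def by blast
  then show ?thesis
    by auto
qed

lemma sgn_dphi_mult_deriv:
  assumes "diffeo_real \<phi>"
  shows "sgn_dphi \<phi> * deriv \<phi> t = \<bar>deriv \<phi> t\<bar>"
proof -
  have "sgn (deriv \<phi> 0) = sgn (deriv \<phi> t)"
    using continuous_nonvanishing_sgn_eq[OF diffeo_real_deriv_continuous[OF assms]]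
      diffeo_real_deriv_nonzero[OF assms] by blast
  then show ?thesis
    unfolding sgn_dphi_def by (simp add: sgn_if)
qed

lemma chart_point_in_topspace:
  "is_chart M X U \<psi> \<Longrightarrow> x \<in> U \<Longrightarrow> \<psi> x \<in> topspace M"
  unfolding is_chart_def by (meson image_eqI openin_subset subsetD)

lemma continuous_map_immersion:
  assumes S: "immersed_surface M X N"
  shows "continuous_map M euclidean X"
proof (rule pasting_lemma[where I = "{(U, \<psi>). is_chart M X U \<psi>}" and T = "\<lambda>(U, \<psi>). \<psi> ` U"
      and f = "\<lambda>_. X"])
  fix i assume "i \<in> {(U, \<psi>). is_chart M X U \<psi>}"
  then obtain U \<psi> where i: "i = (U, \<psi>)" and c: "is_chart M X U \<psi>"
    by auto
  then show "openin M (case i of (U, \<psi>) \<Rightarrow> \<psi> ` U)"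
    unfolding is_chart_def by simp
  obtain g where "homeomorphic_maps (top_of_set U) (subtopology M (\<psi> ` U)) \<psi> g"
    using c homeomorphic_map_maps unfolding is_chart_def by blast
  then have g: "continuous_map (subtopology M (\<psi> ` U)) (top_of_set U) g"
    and \<psi>g: "\<And>p. p \<in> topspace (subtopology M (\<psi> ` U)) \<Longrightarrow> \<psi> (g p) = p"
    unfolding homeomorphic_maps_def by auto
  have "continuous_on U (X \<circ> \<psi>)"
    using c unfolding is_chart_def smooth_on2_def by (metis Ck_on.simps(1))
  then have "continuous_map (top_of_set U) euclidean (X \<circ> \<psi>)"
    by simp
  then have "continuous_map (subtopology M (\<psi> ` U)) euclidean ((X \<circ> \<psi>) \<circ> g)"
    using continuous_map_compose[OF g] by blast
  then have "continuous_map (subtopology M (\<psi> ` U)) euclidean X"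
    by (rule continuous_map_eq) (simp add: \<psi>g)
  then show "continuous_map (subtopology M (case i of (U, \<psi>) \<Rightarrow> \<psi> ` U)) euclidean X"
    using i by simp
next
  fix p assume "p \<in> topspace M"
  then obtain U \<psi> y where "is_chart M X U \<psi>" "y \<in> U" "\<psi> y = p"
    using S unfolding immersed_surface_def by blast
  then show "\<exists>j. j \<in> {(U, \<psi>). is_chart M X U \<psi>} \<and> p \<in> (case j of (U, \<psi>) \<Rightarrow> \<psi> ` U) \<and> X p = X p"
    by (intro exI[of _ "(U, \<psi>)"]) auto
qed simp

lemma positive_lower_bound_off_compact:
  fixes f :: "'a \<Rightarrow> real"
  assumes K: "compactin M K" and f: "continuous_map M euclidean f"
    and pos: "\<And>p. p \<in> topspace M \<Longrightarrow> f p > 0"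
    and "\<xi> > 0" and off_K: "\<forall>p\<in>topspace M - K. f p \<ge> \<xi>"
  obtains c where "c > 0" "\<And>p. p \<in> topspace M \<Longrightarrow> f p \<ge> c"
proof (cases "K = {}")
  case True
  with \<open>\<xi> > 0\<close> off_K show ?thesis
    by (intro that[of \<xi>]) auto
next
  case False
  have "compact (f ` K)"
    using image_compactin[OF K f] by simp
  with False obtain m where "m \<in> f ` K" and m_le: "\<And>y. y \<in> f ` K \<Longrightarrow> m \<le> y"
    using compact_attains_inf by (metis image_is_empty)
  moreover have "K \<subseteq> topspace M"
    using K compactin_subset_topspace by blast
  ultimately have "m > 0"
    using pos by auto
  show ?thesis
  proof (rule that[of "min \<xi> m"])
    show "min \<xi> m > 0"
      using \<open>m > 0\<close> \<open>\<xi> > 0\<close> by simp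
    show "f p \<ge> min \<xi> m" if "p \<in> topspace M" for p
    proof (cases "p \<in> K")
      case True
      then show ?thesis
        using m_le[of "f p"] by (simp add: min.coboundedI2)
    next
      case False
      then show ?thesis
        using off_K that by (simp add: min.coboundedI1)
    qed
  qed
qed
lemma C2_surface_linear_height:
  "C2_surface M X (\<lambda>p. X p \<bullet> v)"
  unfolding C2_surface_def
proof (intro allI impI)
  fix U \<psi> assume "is_chart M X U \<psi>"
  then have "open U" "Ck_on 2 (X \<circ> \<psi>) U"
    unfolding is_chart_def smooth_on2_def by auto
  from Ck_on_bounded_linear_comp[OF bounded_linear_inner_left this]
  show "Ck_on 2 ((\<lambda>p. X p \<bullet> v) \<circ> \<psi>) U"
    by (simp add: o_def)
qed

lemma drift_lap_linear_height:
  assumes \<phi>: "\<And>t. \<phi> differentiable (at t)" and S: "immersed_surface M X N"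
    and min: "phi_minimal \<phi> M X N" and c: "is_chart M X U \<psi>" and x: "x \<in> U"
  shows "drift_lap \<phi> X \<psi> (\<lambda>p. X p \<bullet> v) x = deriv \<phi> (height X (\<psi> x)) * (e3 \<bullet> v)"
proof -
  let ?Y = "X \<circ> \<psi>" and ?n = "N (\<psi> x)" and ?d = "deriv \<phi> (height X (\<psi> x))"
  have U: "open U" and C: "Ck_on 2 ?Y U" and pos: "gdet ?Y x > 0"
    using c x unfolding is_chart_def smooth_on2_def by auto
  have Yd: "?Y differentiable (at x)"
    using Ck2_on_differentiable[OF U C x] by blast
  have height_d: "(\<lambda>y. ?Y y \<bullet> e3) differentiable (at x)"
    using Yd by (intro differentiable_inner differentiable_const)
  have normal: "?n \<bullet> pd1 ?Y x = 0" "?n \<bullet> pd2 ?Y x = 0"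
    using S c x unfolding immersed_surface_def by blast+
  have "norm ?n = 1"
    using S chart_point_in_topspace[OF c x] unfolding immersed_surface_def by blast
  then have unit: "?n \<bullet> ?n = 1"
    by (simp add: norm_eq_1)
  have "lap ?Y (\<lambda>y. ?Y y \<bullet> v) x = lap ?Y ?Y x \<bullet> v"
    using lap_bounded_linear_comp[OF bounded_linear_inner_left U x C pos] .
  also have "\<dots> = ?d * angle_fun N (\<psi> x) * (?n \<bullet> v)"
    using min c x unfolding phi_minimal_def by (metis inner_scaleR_left)
  finally have lap_part: "lap ?Y (\<lambda>y. ?Y y \<bullet> v) x = ?d * angle_fun N (\<psi> x) * (?n \<bullet> v)" .
  have "grad_inner ?Y (\<lambda>y. \<phi> (?Y y \<bullet> e3)) (\<lambda>y. ?Y y \<bullet> v) x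
      = ?d * grad_inner ?Y (\<lambda>y. ?Y y \<bullet> e3) (\<lambda>y. ?Y y \<bullet> v) x"
    using grad_inner_chain_left[OF \<phi> height_d] by (simp add: height_def)
  also have "\<dots> = ?d * (e3 \<bullet> v - angle_fun N (\<psi> x) * (?n \<bullet> v))"
    using grad_inner_linear_heights[OF Yd normal unit pos] by (simp add: angle_fun_def inner_commute)
  finally have grad_part: "grad_inner ?Y (\<lambda>y. \<phi> (?Y y \<bullet> e3)) (\<lambda>y. ?Y y \<bullet> v) x
      = ?d * (e3 \<bullet> v - angle_fun N (\<psi> x) * (?n \<bullet> v))" .
  show ?thesis
    unfolding drift_lap_def using lap_part grad_part
    by (simp add: o_def height_def algebra_simps)
qed

lemma drift_lap_signed_height:
  assumes "diffeo_real \<phi>" "immersed_surface M X N" "phi_minimal \<phi> M X N"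
    and chart: "is_chart M X U \<psi>" and x: "x \<in> U"
  shows "drift_lap \<phi> X \<psi> (\<lambda>p. X p \<bullet> (sgn_dphi \<phi> *\<^sub>R v)) x
    = \<bar>deriv \<phi> (height X (\<psi> x))\<bar> * (v \<bullet> e3)"
proof -
  let ?d = "deriv \<phi> (height X (\<psi> x))"
  have "drift_lap \<phi> X \<psi> (\<lambda>p. X p \<bullet> (sgn_dphi \<phi> *\<^sub>R v)) x = ?d * (e3 \<bullet> (sgn_dphi \<phi> *\<^sub>R v))"
    using drift_lap_linear_height[OF diffeo_real_differentiable[OF assms(1)] assms(2,3) chart x] .
  also have "\<dots> = (sgn_dphi \<phi> * ?d) * (v \<bullet> e3)"
    by (simp add: inner_commute)
  also have "\<dots> = \<bar>?d\<bar> * (v \<bullet> e3)"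
    using sgn_dphi_mult_deriv[OF assms(1)] by simp
  finally show ?thesis .
qed

lemma continuous_map_abs_deriv_height:
  assumes "diffeo_real \<phi>" "immersed_surface M X N"
  shows "continuous_map M euclidean (\<lambda>p. \<bar>deriv \<phi> (height X p)\<bar>)"
proof -
  have "continuous_on UNIV (\<lambda>w::real^3. w \<bullet> e3)"
    by (intro continuous_intros)
  from continuous_on_compose2[OF diffeo_real_deriv_continuous[OF assms(1)] this]
  have "continuous_on UNIV (\<lambda>w::real^3. \<bar>deriv \<phi> (w \<bullet> e3)\<bar>)"
    by (intro continuous_on_rabs) simp
  then have "continuous_map euclidean euclidean (\<lambda>w::real^3. \<bar>deriv \<phi> (w \<bullet> e3)\<bar>)"
    by simp
  from continuous_map_compose[OF continuous_map_immersion[OF assms(2)] this] show ?thesis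
    by (simp add: o_def height_def)
qed

lemma phi_stoch_complete_drift_lap_not_bounded_below:
  assumes "phi_stoch_complete \<phi> M X" "immersed_surface M X N"
    and "C2_surface M X u" "bdd_above (u ` topspace M)" "\<delta> > 0"
    and "\<And>U \<psi> x. is_chart M X U \<psi> \<Longrightarrow> x \<in> U \<Longrightarrow> drift_lap \<phi> X \<psi> u x \<ge> \<delta>"
  shows False
proof -
  obtain p :: "nat \<Rightarrow> 'a" where p: "\<forall>n\<ge>1. p n \<in> topspace M \<and>
      u (p n) > (SUP q\<in>topspace M. u q) - 1 / real n \<and>
      (\<forall>U \<psi> x. is_chart M X U \<psi> \<and> x \<in> U \<and> \<psi> x = p n \<longrightarrow> drift_lap \<phi> X \<psi> u x < 1 / real n)"
    using assms(1,3,4) unfolding phi_stoch_complete_def by blast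
  obtain n :: nat where "n > 0" and n: "1 / real n < \<delta>"
    using ex_inverse_of_nat_less[OF \<open>\<delta> > 0\<close>] by (auto simp: inverse_eq_divide)
  then have "n \<ge> 1"
    by simp
  then obtain U \<psi> x where chart: "is_chart M X U \<psi>" and x: "x \<in> U" and "\<psi> x = p n"
    using p assms(2) unfolding immersed_surface_def by blast
  then have "drift_lap \<phi> X \<psi> u x < 1 / real n"
    using p \<open>n \<ge> 1\<close> by blast
  moreover have "\<delta> \<le> drift_lap \<phi> X \<psi> u x"
    using assms(6)[OF chart x] .
  ultimately show False
    using n by simp
qed

theorem theoremC:
  fixes \<phi> :: "real \<Rightarrow> real" and M :: "'a topology" and X N :: "'a \<Rightarrow> real^3"
    and K :: "'a set" and \<xi> :: real
  assumes "diffeo_real \<phi>"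
    and "immersed_surface M X N"
    and "phi_minimal \<phi> M X N"
    and "phi_stoch_complete \<phi> M X"
    and "compactin M K" and "\<xi> > 0"
    and "\<forall>p\<in>topspace M - K. \<bar>deriv \<phi> (height X p)\<bar> \<ge> \<xi>"
  shows "\<forall>v::real^3. v \<bullet> e3 > 0 \<longrightarrow>
           \<not> (\<forall>p\<in>topspace M. sgn_dphi \<phi> * (X p \<bullet> v) \<le> 0)"
proof (intro allI impI notI)
  fix v :: "real^3"
  assume v: "v \<bullet> e3 > 0" and below: "\<forall>p\<in>topspace M. sgn_dphi \<phi> * (X p \<bullet> v) \<le> 0"
  have "\<bar>deriv \<phi> (height X p)\<bar> > 0" for p
    using diffeo_real_deriv_nonzero[OF assms(1)] by simp
  then obtain c where "c > 0" and c: "\<And>p. p \<in> topspace M \<Longrightarrow> \<bar>deriv \<phi> (height X p)\<bar> \<ge> c"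
    using positive_lower_bound_off_compact[OF assms(5)
          continuous_map_abs_deriv_height[OF assms(1,2)] _ assms(6,7)] by blast
  show False
  proof (rule phi_stoch_complete_drift_lap_not_bounded_below[OF assms(4,2) C2_surface_linear_height])
    show "bdd_above ((\<lambda>p. X p \<bullet> (sgn_dphi \<phi> *\<^sub>R v)) ` topspace M)"
      using below by (intro bdd_aboveI[of _ 0]) force
    show "c * (v \<bullet> e3) > 0"
      using \<open>c > 0\<close> v by simp
    fix U \<psi> x assume chart: "is_chart M X U \<psi>" and x: "x \<in> U"
    show "drift_lap \<phi> X \<psi> (\<lambda>p. X p \<bullet> (sgn_dphi \<phi> *\<^sub>R v)) x \<ge> c * (v \<bullet> e3)"
      unfolding drift_lap_signed_height[OF assms(1-3) chart x]
      using c[OF chart_point_in_topspace[OF chart x]] v by (simp add: mult_right_mono)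
  qed
qed

end
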